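(* Let $(G,K)$ be a Gelfand pair, $X=G/K$, and let $\Gamma=\sum_{j\in\Lambda}A_j$ be a sum of associates of the $(K\backslash G/K)$-association scheme, where $\Lambda$ indexes some subset of the associates. Then for the $i$th irreducible constituent $V_i$ of $1\uparrow^G_K$, the eigenvalue $\eta_i$ of $\Gamma$ on $V_i$ satisfies \[|\eta_i|\le\sqrt{|X|\,|\Omega_\Lambda|/d_i},\] where $d_i=\dim V_i$ and $\Omega_\Lambda=\bigcup_{j\in\Lambda}\Omega_j$.
   Context: $G$ is a finite group and $K\le G$. $(G,K)$ is a Gelfand pair if the permutation representation $\mathbb{C}[G/K]\cong 1\uparrow^G_K$ is multiplicity-free, $1\uparrow^G_K\cong\bigoplus_{i=1}^m V_i$ with pairwise inequivalent irreducibles $V_i$. The double cosets $KgK$ are indexed by $j$; the sphere $\Omega_j\subseteq X$ is the set of cosets $xK$ with $x$ in the $j$th double coset (equivalently the $K$-orbits on $X$). The associate $A_j$ is the $X\times X$ 0/1 matrix with $(A_j)_{xK,yK}=1$ iff $x^{-1}y$ lies in the $j$th double coset. Each $V_i$ (viewed inside $\mathbb{C}[X]$) is an eigenspace of every $A_j$, and $\eta_i$ is the corresponding eigenvalue of $\Gamma$. *)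

theory Defs
  imports Complex_Main "HOL-Algebra.Coset" "HOL-Library.Function_Algebras"
begin

definition coset_space :: "('a, 'b) monoid_scheme \<Rightarrow> 'a set \<Rightarrow> 'a set set" where
  "coset_space G K = (\<lambda>x. x <#\<^bsub>G\<^esub> K) ` carrier G"

text \<open>C[X]: complex functions on X (represented as functions on 'a set vanishing off X).\<close>
definition CX :: "('a, 'b) monoid_scheme \<Rightarrow> 'a set \<Rightarrow> ('a set \<Rightarrow> complex) set" where
  "CX G K = {f. \<forall>c. c \<notin> coset_space G K \<longrightarrow> f c = 0}"

definition perm_act :: "('a, 'b) monoid_scheme \<Rightarrow> 'a set \<Rightarrow> 'a \<Rightarrow> ('a set \<Rightarrow> complex) \<Rightarrow> ('a set \<Rightarrow> complex)" where
  "perm_act G K g f = (\<lambda>c. if c \<in> coset_space G K then f (inv\<^bsub>G\<^esub> g <#\<^bsub>G\<^esub> c) else 0)"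

definition cscale :: "complex \<Rightarrow> ('a set \<Rightarrow> complex) \<Rightarrow> ('a set \<Rightarrow> complex)" where
  "cscale c f = (\<lambda>x. c * f x)"

text \<open>G-invariant (complex) subspaces of C[X], i.e. subrepresentations of 1 induced from K to G.\<close>
definition inv_subspace :: "('a, 'b) monoid_scheme \<Rightarrow> 'a set \<Rightarrow> ('a set \<Rightarrow> complex) set \<Rightarrow> bool" where
  "inv_subspace G K W \<longleftrightarrow> W \<subseteq> CX G K \<and> 0 \<in> W \<and>
     (\<forall>f\<in>W. \<forall>h\<in>W. f + h \<in> W) \<and> (\<forall>c. \<forall>f\<in>W. cscale c f \<in> W) \<and>
     (\<forall>g\<in>carrier G. \<forall>f\<in>W. perm_act G K g f \<in> W)"

definition irred_subrep :: "('a, 'b) monoid_scheme \<Rightarrow> 'a set \<Rightarrow> ('a set \<Rightarrow> complex) set \<Rightarrow> bool" where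
  "irred_subrep G K W \<longleftrightarrow> inv_subspace G K W \<and> W \<noteq> {0} \<and>
     (\<forall>U. inv_subspace G K U \<and> U \<subseteq> W \<longrightarrow> U = {0} \<or> U = W)"

definition equiv_subrep :: "('a, 'b) monoid_scheme \<Rightarrow> 'a set \<Rightarrow> ('a set \<Rightarrow> complex) set \<Rightarrow> ('a set \<Rightarrow> complex) set \<Rightarrow> bool" where
  "equiv_subrep G K W W' \<longleftrightarrow> (\<exists>\<phi>. bij_betw \<phi> W W' \<and>
     (\<forall>f\<in>W. \<forall>h\<in>W. \<phi> (f + h) = \<phi> f + \<phi> h) \<and>
     (\<forall>c. \<forall>f\<in>W. \<phi> (cscale c f) = cscale c (\<phi> f)) \<and>
     (\<forall>g\<in>carrier G. \<forall>f\<in>W. \<phi> (perm_act G K g f) = perm_act G K g (\<phi> f)))"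

text \<open>A multiplicity-free decomposition C[X] = V_0 (+) ... (+) V_{m-1} into pairwise
  inequivalent irreducible subrepresentations (direct sum: unique decomposition).\<close>
definition mult_free_decomp :: "('a, 'b) monoid_scheme \<Rightarrow> 'a set \<Rightarrow> nat \<Rightarrow> (nat \<Rightarrow> ('a set \<Rightarrow> complex) set) \<Rightarrow> bool" where
  "mult_free_decomp G K m V \<longleftrightarrow>
     (\<forall>i<m. irred_subrep G K (V i)) \<and>
     (\<forall>i<m. \<forall>j<m. i \<noteq> j \<longrightarrow> \<not> equiv_subrep G K (V i) (V j)) \<and>
     (\<forall>f\<in>CX G K. \<exists>!u. (\<forall>i<m. u i \<in> V i) \<and> (\<forall>i\<ge>m. u i = 0) \<and> f = (\<Sum>i<m. u i))"

definition gelfand_pair :: "('a, 'b) monoid_scheme \<Rightarrow> 'a set \<Rightarrow> bool" where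
  "gelfand_pair G K \<longleftrightarrow> group G \<and> finite (carrier G) \<and> subgroup K G \<and>
     (\<exists>m V. mult_free_decomp G K m V)"

definition double_coset :: "('a, 'b) monoid_scheme \<Rightarrow> 'a set \<Rightarrow> 'a \<Rightarrow> 'a set" where
  "double_coset G K g = {k1 \<otimes>\<^bsub>G\<^esub> g \<otimes>\<^bsub>G\<^esub> k2 | k1 k2. k1 \<in> K \<and> k2 \<in> K}"

definition double_cosets :: "('a, 'b) monoid_scheme \<Rightarrow> 'a set \<Rightarrow> 'a set set" where
  "double_cosets G K = double_coset G K ` carrier G"

definition sphere :: "('a, 'b) monoid_scheme \<Rightarrow> 'a set \<Rightarrow> 'a set \<Rightarrow> 'a set set" where
  "sphere G K D = (\<lambda>x. x <#\<^bsub>G\<^esub> K) ` D"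

definition associate :: "('a, 'b) monoid_scheme \<Rightarrow> 'a set \<Rightarrow> 'a set \<Rightarrow> 'a set \<Rightarrow> 'a set \<Rightarrow> complex" where
  "associate G K D c c' = (if \<exists>x\<in>carrier G. \<exists>y\<in>carrier G. c = x <#\<^bsub>G\<^esub> K \<and> c' = y <#\<^bsub>G\<^esub> K \<and>
        inv\<^bsub>G\<^esub> x \<otimes>\<^bsub>G\<^esub> y \<in> D then 1 else 0)"

definition assoc_sum_op :: "('a, 'b) monoid_scheme \<Rightarrow> 'a set \<Rightarrow> 'a set set \<Rightarrow> ('a set \<Rightarrow> complex) \<Rightarrow> ('a set \<Rightarrow> complex)" where
  "assoc_sum_op G K \<Lambda> f = (\<lambda>c. if c \<in> coset_space G K then
      (\<Sum>c'\<in>coset_space G K. (\<Sum>D\<in>\<Lambda>. associate G K D c c') * f c') else 0)"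

definition cdim :: "('a set \<Rightarrow> complex) set \<Rightarrow> nat" where
  "cdim W = vector_space.dim cscale W"

end

theory Submission
  imports Defs "HOL-Algebra.Left_Coset"
begin

text \<open>Let \<open>e\<^sub>1, \<dots>, e\<^sub>d\<close> be an orthonormal basis of \<open>V\<^sub>i\<close> for the standard inner
  product on \<open>\<complex>[X]\<close>. If \<open>r\<^sub>c\<close> is the (conjugated) row of \<open>\<Gamma>\<close> at the coset \<open>c\<close>,
  then \<open>\<langle>r\<^sub>c, e\<^sub>k\<rangle>\<close> is the conjugate of \<open>(\<Gamma> e\<^sub>k)(c) = \<eta> e\<^sub>k(c)\<close>, so summing over
  \<open>c\<close> and \<open>k\<close> gives \<open>d |\<eta>|\<^sup>2\<close>; by Bessel's inequality this is at most
  \<open>\<Sum>\<^sub>c \<parallel>r\<^sub>c\<parallel>\<^sup>2\<close>, the squared Frobenius norm of \<open>\<Gamma>\<close>. Distinct double cosets are disjoint,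
  so \<open>\<Gamma>\<close> is a 0/1 matrix whose row at \<open>xK\<close> has its ones at the cosets \<open>yK\<close> with
  \<open>x\<inverse>y \<in> \<Union>\<Lambda>\<close>; left translation by \<open>x\<inverse>\<close> maps these injectively into \<open>\<Omega>\<^sub>\<Lambda>\<close>, whence
  \<open>\<Sum>\<^sub>c \<parallel>r\<^sub>c\<parallel>\<^sup>2 \<le> |X| |\<Omega>\<^sub>\<Lambda>|\<close>.\<close>

lemma sum_fun_apply: "(sum h E) c = (\<Sum>e\<in>E. h e c)"
  by (induction E rule: infinite_finite_induct) auto

(* Since cscale acts on functions of type 'a set \<Rightarrow> complex, the finite-dimensional
   linear algebra below is developed over finite sets X :: 'x set set. *)
interpretation cvs: vector_space cscale
  by unfold_locales (auto simp: cscale_def fun_eq_iff algebra_simps)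

definition vanishing_off :: "'x set set \<Rightarrow> ('x set \<Rightarrow> complex) set" where
  "vanishing_off X = {f. \<forall>c. c \<notin> X \<longrightarrow> f c = 0}"

definition inner_on :: "'x set set \<Rightarrow> ('x set \<Rightarrow> complex) \<Rightarrow> ('x set \<Rightarrow> complex) \<Rightarrow> complex" where
  "inner_on X f g = (\<Sum>c\<in>X. f c * cnj (g c))"

definition sqnorm_on :: "'x set set \<Rightarrow> ('x set \<Rightarrow> complex) \<Rightarrow> real" where
  "sqnorm_on X f = (\<Sum>c\<in>X. (cmod (f c))\<^sup>2)"

definition orthonormal_on :: "'x set set \<Rightarrow> ('x set \<Rightarrow> complex) set \<Rightarrow> bool" where
  "orthonormal_on X E \<longleftrightarrow> (\<forall>e\<in>E. \<forall>e'\<in>E. inner_on X e e' = (if e = e' then 1 else 0))"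

definition proj_on :: "'x set set \<Rightarrow> ('x set \<Rightarrow> complex) set \<Rightarrow> ('x set \<Rightarrow> complex) \<Rightarrow> ('x set \<Rightarrow> complex)" where
  "proj_on X E f = (\<Sum>e\<in>E. cscale (inner_on X f e) e)"

lemma inner_on_self: "inner_on X f f = of_real (sqnorm_on X f)"
  by (simp only: inner_on_def sqnorm_on_def of_real_sum complex_norm_square)

lemma sqnorm_on_nonneg: "sqnorm_on X f \<ge> 0"
  by (simp add: sqnorm_on_def sum_nonneg)

lemma inner_on_commute: "inner_on X g f = cnj (inner_on X f g)"
  by (simp add: inner_on_def mult.commute)

lemma inner_on_diff_left: "inner_on X (f - h) g = inner_on X f g - inner_on X h g"
  by (simp add: inner_on_def left_diff_distrib sum_subtractf)

lemma inner_on_diff_right: "inner_on X g (f - h) = inner_on X g f - inner_on X g h"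
  by (simp add: inner_on_def right_diff_distrib sum_subtractf)

lemma inner_on_scale_left: "inner_on X (cscale a f) g = a * inner_on X f g"
  by (simp add: inner_on_def cscale_def sum_distrib_left mult.assoc)

lemma inner_on_scale_right: "inner_on X f (cscale a g) = cnj a * inner_on X f g"
  by (simp add: inner_on_def cscale_def sum_distrib_left algebra_simps)

lemma inner_on_sum_left: "inner_on X (sum h E) g = (\<Sum>e\<in>E. inner_on X (h e) g)"
  by (simp add: inner_on_def sum_fun_apply sum_distrib_right) (rule sum.swap)

lemma inner_on_sum_right: "inner_on X g (sum h E) = (\<Sum>e\<in>E. inner_on X g (h e))"
  by (subst inner_on_commute) (simp add: inner_on_sum_left inner_on_commute[of X g])

lemma sqnorm_on_pos:
  assumes "finite X" "f \<in> vanishing_off X" "f \<noteq> 0"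
  shows "sqnorm_on X f > 0"
proof -
  obtain c where "f c \<noteq> 0" using assms(3) by (auto simp: fun_eq_iff)
  with assms(2) have "c \<in> X" by (auto simp: vanishing_off_def)
  have "(cmod (f c))\<^sup>2 \<le> sqnorm_on X f"
    unfolding sqnorm_on_def using assms(1) \<open>c \<in> X\<close> by (intro member_le_sum) auto
  moreover have "(cmod (f c))\<^sup>2 > 0" using \<open>f c \<noteq> 0\<close> by simp
  ultimately show ?thesis by linarith
qed

lemma inner_on_proj_on:
  assumes "orthonormal_on X E" "finite E" "e0 \<in> E"
  shows "inner_on X (proj_on X E f) e0 = inner_on X f e0"
proof -
  have "inner_on X (proj_on X E f) e0 = (\<Sum>e\<in>E. inner_on X f e * inner_on X e e0)"
    by (simp add: proj_on_def inner_on_sum_left inner_on_scale_left)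
  also have "\<dots> = (\<Sum>e\<in>E. if e = e0 then inner_on X f e else 0)"
    using assms(1,3) unfolding orthonormal_on_def by (intro sum.cong) auto
  finally show ?thesis using assms(2,3) by simp
qed

lemma bessel_inequality:
  assumes "orthonormal_on X E" "finite E"
  shows "(\<Sum>e\<in>E. (cmod (inner_on X f e))\<^sup>2) \<le> sqnorm_on X f"
proof -
  define p where "p = proj_on X E f"
  define S where "S = (\<Sum>e\<in>E. (cmod (inner_on X f e))\<^sup>2)"
  have fp: "inner_on X f p = of_real S"
    by (simp add: p_def proj_on_def S_def inner_on_sum_right inner_on_scale_right mult.commute
        flip: complex_norm_square)
  have pp: "inner_on X p p = of_real S"
  proof -
    have "inner_on X p p = (\<Sum>e\<in>E. cnj (inner_on X f e) * inner_on X f e)"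
      using inner_on_proj_on[OF assms]
      by (subst (2) p_def) (simp add: proj_on_def p_def inner_on_sum_right inner_on_scale_right)
    then show ?thesis by (simp add: S_def mult.commute flip: complex_norm_square)
  qed
  have "of_real (sqnorm_on X (f - p)) = inner_on X (f - p) (f - p)"
    by (simp add: inner_on_self)
  also have "\<dots> = of_real (sqnorm_on X f - S)"
    by (simp only: inner_on_diff_left inner_on_diff_right inner_on_commute[of X p f] fp pp)
      (simp add: inner_on_self)
  finally have "sqnorm_on X (f - p) = sqnorm_on X f - S"
    using of_real_eq_iff by blast
  with sqnorm_on_nonneg[of X "f - p"] show ?thesis by (simp add: S_def)
qed

lemma orthonormal_on_insert:
  assumes "orthonormal_on X E" "inner_on X e e = 1" "\<And>e'. e' \<in> E \<Longrightarrow> inner_on X e e' = 0"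
  shows "orthonormal_on X (insert e E)"
proof -
  have "inner_on X e' e = 0" if "e' \<in> E" for e'
    using assms(3)[OF that] inner_on_commute[of X e' e] by simp
  with assms show ?thesis unfolding orthonormal_on_def by auto
qed

lemma orthonormal_on_extend:
  assumes X: "finite X" and V: "cvs.subspace V" "V \<subseteq> vanishing_off X"
    and E: "finite E" "E \<subseteq> V" "orthonormal_on X E" and b: "b \<in> V"
  obtains E' where "finite E'" "E' \<subseteq> V" "orthonormal_on X E'" "E \<subseteq> E'" "b \<in> cvs.span E'"
proof -
  define p where "p = proj_on X E b"
  define r where "r = b - p"
  have p_span: "p \<in> cvs.span E"
    unfolding p_def proj_on_def by (intro cvs.span_sum cvs.span_scale cvs.span_base)
  have "p \<in> V"
    using cvs.span_minimal[OF E(2) V(1)] p_span by blast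
  with V(1) b have r_V: "r \<in> V" unfolding r_def by (rule cvs.subspace_diff)
  have r_orth: "inner_on X r e = 0" if "e \<in> E" for e
    using inner_on_proj_on[OF E(3,1) that] by (simp add: r_def p_def inner_on_diff_left)
  show ?thesis
  proof (cases "r = 0")
    case True
    then have "b \<in> cvs.span E" using p_span by (simp add: r_def)
    with E that show ?thesis by blast
  next
    case False
    define n where "n = sqrt (sqnorm_on X r)"
    have "n > 0"
      using sqnorm_on_pos[OF X _ False] r_V V(2) by (auto simp: n_def)
    define e where "e = cscale (of_real (1 / n)) r"
    have "e \<in> V" unfolding e_def using V(1) r_V by (rule cvs.subspace_scale)
    have "inner_on X e e = of_real (1 / n) * cnj (of_real (1 / n)) * inner_on X r r"
      by (simp add: e_def inner_on_scale_left inner_on_scale_right)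
    also have "\<dots> = of_real ((1 / n)\<^sup>2 * sqnorm_on X r)"
      by (simp add: inner_on_self power2_eq_square)
    also have "\<dots> = 1"
      using \<open>n > 0\<close> sqnorm_on_nonneg[of X r] by (simp add: n_def power2_eq_square)
    finally have "orthonormal_on X (insert e E)"
      using E(3) r_orth by (intro orthonormal_on_insert) (simp_all add: e_def inner_on_scale_left)
    have "b = p + cscale (of_real n) e"
      using \<open>n > 0\<close> by (simp add: r_def e_def cscale_def fun_eq_iff)
    moreover have "p \<in> cvs.span (insert e E)"
      using p_span cvs.span_mono[of E "insert e E"] by blast
    moreover have "cscale (of_real n) e \<in> cvs.span (insert e E)"
      by (intro cvs.span_scale cvs.span_base) simp
    ultimately have "b \<in> cvs.span (insert e E)" by (metis cvs.span_add)
    with E \<open>e \<in> V\<close> \<open>orthonormal_on X (insert e E)\<close> show ?thesis by (intro that) auto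
  qed
qed

lemma orthonormal_on_spanning_exists:
  assumes X: "finite X" and V: "cvs.subspace V" "V \<subseteq> vanishing_off X"
    and B: "finite B" "B \<subseteq> V"
  obtains E where "finite E" "E \<subseteq> V" "orthonormal_on X E" "B \<subseteq> cvs.span E"
  using B
proof (induction B arbitrary: thesis rule: finite_induct)
  case empty
  show ?case by (rule empty.prems(1)[of "{}"]) (auto simp: orthonormal_on_def)
next
  case (insert b B)
  obtain E where E: "finite E" "E \<subseteq> V" "orthonormal_on X E" "B \<subseteq> cvs.span E"
    using insert.IH insert.prems(2) by blast
  obtain E' where E': "finite E'" "E' \<subseteq> V" "orthonormal_on X E'" "E \<subseteq> E'" "b \<in> cvs.span E'"
    using orthonormal_on_extend[OF X V E(1-3)] insert.prems(2) by blast
  have "B \<subseteq> cvs.span E'" using E(4) cvs.span_mono[OF E'(4)] by blast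
  with E' show ?case by (intro insert.prems(1)[of E']) auto
qed

lemma vanishing_off_subspace_basis_exists:
  fixes X :: "'x set set"
  assumes "finite X" "V \<subseteq> vanishing_off X"
  obtains B where "finite B" "B \<subseteq> V" "V \<subseteq> cvs.span B" "card B = cvs.dim V"
proof -
  define \<delta> where "\<delta> c = (\<lambda>x. if x = c then 1 else 0 :: complex)" for c :: "'x set"
  have "f \<in> cvs.span (\<delta> ` X)" if "f \<in> V" for f
  proof -
    have "f x = (\<Sum>c\<in>X. cscale (f c) (\<delta> c)) x" for x
      using assms \<open>f \<in> V\<close>
      by (auto simp: sum_fun_apply cscale_def \<delta>_def vanishing_off_def if_distrib[of "(*) _"]
          cong: if_cong)
    then have "f = (\<Sum>c\<in>X. cscale (f c) (\<delta> c))" ..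
    also have "\<dots> \<in> cvs.span (\<delta> ` X)"
      by (intro cvs.span_sum cvs.span_scale cvs.span_base) auto
    finally show ?thesis .
  qed
  moreover obtain B where "B \<subseteq> V" "cvs.independent B" "V \<subseteq> cvs.span B" "card B = cvs.dim V"
    using cvs.basis_exists by blast
  ultimately show ?thesis
    using cvs.independent_span_bound[of "\<delta> ` X" B] assms(1) that by blast
qed

lemma orthonormal_on_basis_exists:
  assumes "finite X" "cvs.subspace V" "V \<subseteq> vanishing_off X"
  obtains E where "finite E" "E \<subseteq> V" "orthonormal_on X E" "cvs.dim V \<le> card E"
proof -
  obtain B where B: "finite B" "B \<subseteq> V" "V \<subseteq> cvs.span B" "card B = cvs.dim V"
    by (rule vanishing_off_subspace_basis_exists[OF assms(1,3)])
  obtain E where E: "finite E" "E \<subseteq> V" "orthonormal_on X E" "B \<subseteq> cvs.span E"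
    by (rule orthonormal_on_spanning_exists[OF assms B(1,2)])
  have "cvs.span B \<subseteq> cvs.span E"
    using cvs.span_mono[OF E(4)] by (simp only: cvs.span_span)
  with B(3) have "V \<subseteq> cvs.span E" by (rule order.trans)
  then have "cvs.dim V \<le> card E" using E(1) by (rule cvs.dim_le_card)
  with E(1-3) show ?thesis by (rule that)
qed

lemma vanishing_off_subspace_dim_pos:
  assumes "finite X" "V \<subseteq> vanishing_off X" "f \<in> V" "f \<noteq> 0"
  shows "cvs.dim V > 0"
proof (rule ccontr)
  assume "\<not> cvs.dim V > 0"
  moreover obtain B where "finite B" "B \<subseteq> V" "V \<subseteq> cvs.span B" "card B = cvs.dim V"
    by (rule vanishing_off_subspace_basis_exists[OF assms(1,2)])
  ultimately have "V \<subseteq> cvs.span {}" by simp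
  with assms(3,4) show False by auto
qed

lemma eigenvalue_bound_frobenius:
  fixes M :: "'x set \<Rightarrow> 'x set \<Rightarrow> complex"
  assumes "finite X" "cvs.subspace V" "V \<subseteq> vanishing_off X"
    and eigen: "\<And>f c. f \<in> V \<Longrightarrow> c \<in> X \<Longrightarrow> (\<Sum>c'\<in>X. M c c' * f c') = \<eta> * f c"
  shows "(cmod \<eta>)\<^sup>2 * real (cvs.dim V) \<le> (\<Sum>c\<in>X. \<Sum>c'\<in>X. (cmod (M c c'))\<^sup>2)"
proof -
  obtain E where E: "finite E" "E \<subseteq> V" "orthonormal_on X E" "cvs.dim V \<le> card E"
    by (rule orthonormal_on_basis_exists[OF assms(1-3)])
  define row where "row c = (\<lambda>c'. cnj (M c c'))" for c
  have row_coeff: "(\<Sum>c\<in>X. (cmod (inner_on X (row c) e))\<^sup>2) = (cmod \<eta>)\<^sup>2" if "e \<in> E" for e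
  proof -
    have e_V: "e \<in> V" using \<open>e \<in> E\<close> E(2) by blast
    have "inner_on X (row c) e = cnj (\<eta> * e c)" if "c \<in> X" for c
    proof -
      have "inner_on X (row c) e = cnj (\<Sum>c'\<in>X. M c c' * e c')"
        by (simp add: inner_on_def row_def cnj_sum)
      also have "\<dots> = cnj (\<eta> * e c)" using eigen[OF e_V that] by simp
      finally show ?thesis .
    qed
    then have "(\<Sum>c\<in>X. (cmod (inner_on X (row c) e))\<^sup>2) = (cmod \<eta>)\<^sup>2 * sqnorm_on X e"
      by (simp add: sqnorm_on_def sum_distrib_left norm_mult power_mult_distrib)
    moreover have "sqnorm_on X e = 1"
      using E(3) \<open>e \<in> E\<close> inner_on_self[of X e] unfolding orthonormal_on_def by simp
    ultimately show ?thesis by simp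
  qed
  have "(cmod \<eta>)\<^sup>2 * real (cvs.dim V) \<le> (cmod \<eta>)\<^sup>2 * real (card E)"
    using E(4) by (intro mult_left_mono) auto
  also have "\<dots> = (\<Sum>e\<in>E. \<Sum>c\<in>X. (cmod (inner_on X (row c) e))\<^sup>2)"
    using row_coeff by simp
  also have "\<dots> = (\<Sum>c\<in>X. \<Sum>e\<in>E. (cmod (inner_on X (row c) e))\<^sup>2)"
    by (rule sum.swap)
  also have "\<dots> \<le> (\<Sum>c\<in>X. sqnorm_on X (row c))"
    by (intro sum_mono bessel_inequality E(1,3))
  finally show ?thesis by (simp add: sqnorm_on_def row_def)
qed

context group
begin

lemma double_coset_subset_carrier:
  assumes "subgroup K G" "g \<in> carrier G"
  shows "double_coset G K g \<subseteq> carrier G"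
  using assms unfolding double_coset_def by (auto dest: subgroup.mem_carrier)

lemma double_coset_mult_closed:
  assumes K: "subgroup K G" and "g \<in> carrier G" "z \<in> double_coset G K g" "k \<in> K" "k' \<in> K"
  shows "k \<otimes> z \<otimes> k' \<in> double_coset G K g"
proof -
  obtain h h' where z: "z = h \<otimes> g \<otimes> h'" "h \<in> K" "h' \<in> K"
    using assms(3) unfolding double_coset_def by auto
  have "k \<otimes> z \<otimes> k' = (k \<otimes> h) \<otimes> g \<otimes> (h' \<otimes> k')"
    using z assms by (simp add: m_assoc subgroup.mem_carrier)
  moreover have "k \<otimes> h \<in> K" "h' \<otimes> k' \<in> K"
    using z assms by (simp_all add: subgroup.m_closed)
  ultimately show ?thesis unfolding double_coset_def by blast
qed

lemma double_coset_self:
  assumes "subgroup K G" "g \<in> carrier G"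
  shows "g \<in> double_coset G K g"
proof -
  have "g = \<one> \<otimes> g \<otimes> \<one>" using assms(2) by simp
  then show ?thesis unfolding double_coset_def using subgroup.one_closed[OF assms(1)] by blast
qed

lemma double_coset_subset:
  assumes K: "subgroup K G" and g: "g \<in> carrier G" and z: "z \<in> double_coset G K g"
  shows "double_coset G K z \<subseteq> double_coset G K g"
proof
  fix w assume "w \<in> double_coset G K z"
  then obtain k k' where "w = k \<otimes> z \<otimes> k'" "k \<in> K" "k' \<in> K"
    unfolding double_coset_def by auto
  then show "w \<in> double_coset G K g" using double_coset_mult_closed[OF K g z] by simp
qed

lemma double_coset_eq:
  assumes K: "subgroup K G" and g: "g \<in> carrier G" and z: "z \<in> double_coset G K g"
  shows "double_coset G K z = double_coset G K g"
proof
  show "double_coset G K z \<subseteq> double_coset G K g" by (rule double_coset_subset[OF assms])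
  have z_carrier: "z \<in> carrier G" using double_coset_subset_carrier[OF K g] z by blast
  obtain h h' where h: "z = h \<otimes> g \<otimes> h'" "h \<in> K" "h' \<in> K"
    using z unfolding double_coset_def by auto
  have hc: "h \<in> carrier G" "h' \<in> carrier G" using h K by (auto dest: subgroup.mem_carrier)
  have "g = inv h \<otimes> z \<otimes> inv h'"
    using h hc g by (simp add: m_assoc) (simp flip: m_assoc)
  also have "\<dots> \<in> double_coset G K z"
    using h(2,3) K
    by (intro double_coset_mult_closed[OF K z_carrier double_coset_self[OF K z_carrier]])
      (auto simp: subgroup.m_inv_closed)
  finally show "double_coset G K g \<subseteq> double_coset G K z"
    by (rule double_coset_subset[OF K z_carrier])
qed

lemma double_cosets_disjoint:
  assumes K: "subgroup K G" and "D \<in> double_cosets G K" "D' \<in> double_cosets G K"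
    and "z \<in> D" "z \<in> D'"
  shows "D = D'"
proof -
  obtain g g' where "g \<in> carrier G" "D = double_coset G K g" "g' \<in> carrier G" "D' = double_coset G K g'"
    using assms(2,3) unfolding double_cosets_def by blast
  then show ?thesis using double_coset_eq[OF K] assms(4,5) by metis
qed

lemma associate_l_coset:
  assumes K: "subgroup K G" and D: "D \<in> double_cosets G K"
    and x: "x \<in> carrier G" and y: "y \<in> carrier G"
  shows "associate G K D (x <# K) (y <# K) = (if inv x \<otimes> y \<in> D then 1 else 0)"
proof -
  have "inv x \<otimes> y \<in> D"
    if x': "x' \<in> carrier G" "x <# K = x' <# K" and y': "y' \<in> carrier G" "y <# K = y' <# K"
      and "inv x' \<otimes> y' \<in> D" for x' y'
  proof -
    obtain g where g: "g \<in> carrier G" "D = double_coset G K g"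
      using D unfolding double_cosets_def by auto
    have "x' \<in> x <# K" "y' \<in> y <# K" using lcos_self[OF _ K] x' y' by auto
    then have k: "inv x \<otimes> x' \<in> K" "inv y \<otimes> y' \<in> K"
      using subgroup.lcos_module_imp[OF K is_group] x y by auto
    have "inv x \<otimes> y = (inv x \<otimes> x') \<otimes> (inv x' \<otimes> y') \<otimes> inv (inv y \<otimes> y')"
      using x y x' y' by (simp add: m_assoc inv_mult_group) (simp flip: m_assoc)
    also have "\<dots> \<in> D"
      using k \<open>inv x' \<otimes> y' \<in> D\<close> g K
      by (auto intro: double_coset_mult_closed simp: subgroup.m_inv_closed)
    finally show ?thesis .
  qed
  then show ?thesis using x y unfolding associate_def by auto
qed

lemma sum_associate_l_coset:
  assumes K: "subgroup K G" and \<Lambda>: "finite \<Lambda>" "\<Lambda> \<subseteq> double_cosets G K"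
    and x: "x \<in> carrier G" and y: "y \<in> carrier G"
  shows "(\<Sum>D\<in>\<Lambda>. associate G K D (x <# K) (y <# K)) = (if inv x \<otimes> y \<in> \<Union>\<Lambda> then 1 else 0)"
proof (cases "inv x \<otimes> y \<in> \<Union>\<Lambda>")
  case True
  then obtain D0 where D0: "D0 \<in> \<Lambda>" "inv x \<otimes> y \<in> D0" by blast
  have "associate G K D (x <# K) (y <# K) = (if D = D0 then 1 else 0)" if "D \<in> \<Lambda>" for D
  proof -
    have "inv x \<otimes> y \<in> D \<longleftrightarrow> D = D0"
      using double_cosets_disjoint[OF K] \<Lambda>(2) that D0 by blast
    then show ?thesis using associate_l_coset[OF K subsetD[OF \<Lambda>(2) that] x y] by simp
  qed
  then have "(\<Sum>D\<in>\<Lambda>. associate G K D (x <# K) (y <# K)) = (\<Sum>D\<in>\<Lambda>. if D = D0 then 1 else 0)"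
    by (rule sum.cong[OF refl])
  with True D0(1) \<Lambda>(1) show ?thesis by simp
next
  case False
  have "associate G K D (x <# K) (y <# K) = 0" if "D \<in> \<Lambda>" for D
    using False that associate_l_coset[OF K subsetD[OF \<Lambda>(2) that] x y] by auto
  with False show ?thesis by (simp add: sum.neutral)
qed

lemma l_coset_inj_on:
  assumes "a \<in> carrier G"
  shows "inj_on (\<lambda>A. a <# A) (Pow (carrier G))"
proof (rule inj_on_inverseI)
  fix A assume "A \<in> Pow (carrier G)"
  then show "inv a <# (a <# A) = A"
    using assms by (simp add: lcos_m_assoc lcos_mult_one)
qed

lemma associate_row_sqnorm_le_card_spheres:
  assumes K: "subgroup K G" and fin: "finite (carrier G)" and \<Lambda>: "\<Lambda> \<subseteq> double_cosets G K"
    and c: "c \<in> coset_space G K"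
  shows "(\<Sum>c'\<in>coset_space G K. (cmod (\<Sum>D\<in>\<Lambda>. associate G K D c c'))\<^sup>2)
         \<le> real (card (\<Union>D\<in>\<Lambda>. sphere G K D))"
proof -
  define X where "X = coset_space G K"
  define \<Omega> where "\<Omega> = (\<Union>D\<in>\<Lambda>. sphere G K D)"
  obtain x where x: "x \<in> carrier G" "c = x <# K" using c unfolding coset_space_def by auto
  have "finite X" using fin unfolding X_def coset_space_def by simp
  have "finite \<Lambda>"
    using \<Lambda> fin unfolding double_cosets_def by (meson finite_imageI finite_subset)
  have X_Pow: "X \<subseteq> Pow (carrier G)"
    unfolding X_def coset_space_def using l_coset_subset_G[OF subgroup.subset[OF K]] by auto
  have "\<Omega> \<subseteq> X"
    using \<Lambda> double_coset_subset_carrier[OF K]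
    unfolding \<Omega>_def X_def sphere_def coset_space_def double_cosets_def by blast
  then have "finite \<Omega>" using \<open>finite X\<close> by (rule finite_subset)
  have row_entry: "(cmod (\<Sum>D\<in>\<Lambda>. associate G K D c c'))\<^sup>2 \<le> (if inv x <# c' \<in> \<Omega> then 1 else 0)"
    if c'_X: "c' \<in> X" for c'
  proof -
    obtain y where y: "y \<in> carrier G" "c' = y <# K"
      using c'_X unfolding X_def coset_space_def by auto
    have "inv x <# c' = (inv x \<otimes> y) <# K"
      using x y lcos_m_assoc[OF subgroup.subset[OF K]] by simp
    then have "inv x <# c' \<in> \<Omega>" if "inv x \<otimes> y \<in> \<Union>\<Lambda>"
      using that unfolding \<Omega>_def sphere_def by blast
    then show ?thesis
      using sum_associate_l_coset[OF K \<open>finite \<Lambda>\<close> \<Lambda> x(1) y(1)] x y by simp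
  qed
  have "(\<Sum>c'\<in>X. (cmod (\<Sum>D\<in>\<Lambda>. associate G K D c c'))\<^sup>2) \<le> (\<Sum>c'\<in>X. if inv x <# c' \<in> \<Omega> then 1 else 0)"
    using row_entry by (rule sum_mono)
  also have "\<dots> = real (card {c'\<in>X. inv x <# c' \<in> \<Omega>})"
    using \<open>finite X\<close> by (simp add: sum.inter_filter[symmetric])
  also have "card {c'\<in>X. inv x <# c' \<in> \<Omega>} \<le> card \<Omega>"
    using l_coset_inj_on[OF inv_closed[OF x(1)]] X_Pow \<open>finite \<Omega>\<close>
    by (intro card_inj_on_le) (auto intro: inj_on_subset)
  finally show ?thesis unfolding X_def \<Omega>_def by simp
qed

end

lemma inv_subspace_subspace: "inv_subspace G K W \<Longrightarrow> cvs.subspace W"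
  unfolding inv_subspace_def cvs.subspace_def by auto

lemma inv_subspace_vanishing_off: "inv_subspace G K W \<Longrightarrow> W \<subseteq> vanishing_off (coset_space G K)"
  unfolding inv_subspace_def CX_def vanishing_off_def by auto

theorem mainTheorem18:
  fixes G :: "('a, 'b) monoid_scheme" and K :: "'a set"
    and m :: nat and V :: "nat \<Rightarrow> ('a set \<Rightarrow> complex) set"
    and \<Lambda> :: "'a set set" and i :: nat and \<eta> :: complex
  assumes "gelfand_pair G K"
    and "mult_free_decomp G K m V"
    and "\<Lambda> \<subseteq> double_cosets G K"
    and "i < m"
    and "\<forall>f\<in>V i. assoc_sum_op G K \<Lambda> f = cscale \<eta> f"
  shows "cmod \<eta> \<le> sqrt (real (card (coset_space G K)) * real (card (\<Union>D\<in>\<Lambda>. sphere G K D))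
                        / real (cdim (V i)))"
proof -
  have "group G" and fin: "finite (carrier G)" and K: "subgroup K G"
    using assms(1) unfolding gelfand_pair_def by auto
  define X where "X = coset_space G K"
  define M where "M c c' = (\<Sum>D\<in>\<Lambda>. associate G K D c c')" for c c'
  have "finite X" using fin unfolding X_def coset_space_def by simp
  have "irred_subrep G K (V i)" using assms(2,4) unfolding mult_free_decomp_def by blast
  then have W: "inv_subspace G K (V i)" and "V i \<noteq> {0}" unfolding irred_subrep_def by auto
  note V = inv_subspace_subspace[OF W] inv_subspace_vanishing_off[OF W, folded X_def]
  have eigen: "(\<Sum>c'\<in>X. M c c' * f c') = \<eta> * f c" if "f \<in> V i" "c \<in> X" for f c
    using fun_cong[OF assms(5)[rule_format, OF that(1)], of c] that(2)
    by (simp add: assoc_sum_op_def cscale_def X_def M_def)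
  have "(cmod \<eta>)\<^sup>2 * real (cdim (V i)) \<le> (\<Sum>c\<in>X. \<Sum>c'\<in>X. (cmod (M c c'))\<^sup>2)"
    unfolding cdim_def using \<open>finite X\<close> V eigen by (rule eigenvalue_bound_frobenius)
  also have "\<dots> \<le> (\<Sum>c\<in>X. real (card (\<Union>D\<in>\<Lambda>. sphere G K D)))"
    unfolding X_def M_def
    by (intro sum_mono group.associate_row_sqnorm_le_card_spheres[OF \<open>group G\<close> K fin assms(3)])
  finally have "(cmod \<eta>)\<^sup>2 * real (cdim (V i)) \<le> real (card X) * real (card (\<Union>D\<in>\<Lambda>. sphere G K D))"
    by simp
  moreover have "cdim (V i) > 0"
  proof -
    obtain f where "f \<in> V i" "f \<noteq> 0"
      using \<open>V i \<noteq> {0}\<close> W unfolding inv_subspace_def by blast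
    with \<open>finite X\<close> V(2) show ?thesis unfolding cdim_def by (rule vanishing_off_subspace_dim_pos)
  qed
  ultimately show ?thesis
    unfolding X_def by (simp add: real_le_rsqrt pos_le_divide_eq)
qed

end
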